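(* Let $f:\mathbb{R}^n\to\mathbb{R}$ be continuously differentiable, convex and $L$-smooth with unique minimizer $0$ and $f(0)=0$. Consider the iteration (Nesterov's method in two-sequence form), from given initial points $x_{-1},x_0\in\mathbb{R}^n$, $$y_k=x_k+b_k(x_k-x_{k-1}),\qquad x_{k+1}=y_k-s_k\nabla f(y_k),$$ with $0<s_k\le\frac1L$ and $0<b_k\le1$ for all $k$. If $$\langle x_{k+1}-2x_k+x_{k-1},\,x_k-x_{k-1}\rangle\ge0\quad\text{for all }k,$$ then $f(x_{k+1})<f(x_k)$ for all $k$.
   Context: $L$-smooth means $\nabla f$ is $L$-Lipschitz continuous. *)

theory Defs
  imports "HOL-Analysis.Analysis"
begin

end

theory Submission imports Defs begin

text \<open>
  Write \<open>g\<close> for the gradient at \<open>y\<^sub>k\<close> and \<open>d = x\<^sub>k - x\<^sub>k\<^sub>-\<^sub>1\<close>. The descent lemma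
  for the gradient step gives \<open>f x\<^sub>k\<^sub>+\<^sub>1 \<le> f y\<^sub>k - s\<^sub>k |g|\<^sup>2 / 2\<close>, and convexity at \<open>y\<^sub>k\<close> gives
  \<open>f y\<^sub>k \<le> f x\<^sub>k + b\<^sub>k (g \<bullet> d)\<close>. As \<open>s\<^sub>k g = b\<^sub>k d - (x\<^sub>k\<^sub>+\<^sub>1 - x\<^sub>k)\<close>, the hypothesis on second
  differences and \<open>b\<^sub>k \<le> 1\<close> force \<open>g \<bullet> d \<le> 0\<close>, so \<open>f\<close> drops by at least \<open>s\<^sub>k |g|\<^sup>2 / 2\<close>.
  If \<open>g = 0\<close> instead, \<open>y\<^sub>k\<close> is the minimizer \<open>0\<close>, hence so is \<open>x\<^sub>k\<^sub>+\<^sub>1\<close>.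
\<close>

lemma has_real_derivative_along_line:
  fixes f :: "'a::real_inner \<Rightarrow> real"
  assumes grad: "\<And>z. (f has_derivative (\<lambda>h. gradf z \<bullet> h)) (at z)"
  shows "((\<lambda>t. f (y + t *\<^sub>R h)) has_real_derivative (gradf (y + t *\<^sub>R h) \<bullet> h)) (at t within S)"
proof -
  have "((\<lambda>t. y + t *\<^sub>R h) has_derivative (\<lambda>u. u *\<^sub>R h)) (at t within S)"
    by (auto intro!: derivative_eq_intros)
  from has_derivative_compose[OF this grad]
  have "((\<lambda>t. f (y + t *\<^sub>R h)) has_derivative (\<lambda>u. gradf (y + t *\<^sub>R h) \<bullet> (u *\<^sub>R h))) (at t within S)" .
  moreover have "(\<lambda>u. gradf (y + t *\<^sub>R h) \<bullet> (u *\<^sub>R h)) = (*) (gradf (y + t *\<^sub>R h) \<bullet> h)"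
    by (auto simp: mult.commute)
  ultimately show ?thesis by (simp add: has_field_derivative_def)
qed

lemma convex_on_gradient_inequality:
  fixes f :: "'a::real_inner \<Rightarrow> real"
  assumes grad: "\<And>z. (f has_derivative (\<lambda>h. gradf z \<bullet> h)) (at z)"
    and cvx: "convex_on UNIV f"
  shows "f y + gradf y \<bullet> (z - y) \<le> f z"
proof -
  let ?h = "\<lambda>t. f (y + t *\<^sub>R (z - y))"
  have "convex_on UNIV ?h"
  proof (rule convex_onI)
    fix t a b :: real assume t: "0 < t" "t < 1"
    have "y + ((1 - t) *\<^sub>R a + t *\<^sub>R b) *\<^sub>R (z - y)
       = (1 - t) *\<^sub>R (y + a *\<^sub>R (z - y)) + t *\<^sub>R (y + b *\<^sub>R (z - y))"
      by (simp add: algebra_simps)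
    then show "?h ((1 - t) *\<^sub>R a + t *\<^sub>R b) \<le> (1 - t) * ?h a + t * ?h b"
      using convex_onD[OF cvx, of t] t by simp
  qed simp
  then have "?h 1 - ?h 0 \<ge> (gradf (y + 0 *\<^sub>R (z - y)) \<bullet> (z - y)) * (1 - 0)"
    by (rule convex_on_imp_above_tangent)
      (use has_real_derivative_along_line[OF grad, of y "z - y" 0 UNIV] in auto)
  then show ?thesis by simp
qed

lemma lipschitz_gradient_quadratic_upper_bound:
  fixes f :: "'a::real_inner \<Rightarrow> real"
  assumes grad: "\<And>z. (f has_derivative (\<lambda>h. gradf z \<bullet> h)) (at z)"
    and smooth: "\<And>u v. norm (gradf u - gradf v) \<le> L * norm (u - v)"
  shows "f (y + h) \<le> f y + gradf y \<bullet> h + L / 2 * norm h ^ 2"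
proof -
  define \<phi> where "\<phi> t = f (y + t *\<^sub>R h) - t * (gradf y \<bullet> h) - L * t\<^sup>2 * norm h ^ 2 / 2" for t
  have "\<phi> 1 \<le> \<phi> 0"
  proof (rule DERIV_nonpos_imp_nonincreasing[of 0 1 \<phi>])
    fix t :: real assume t: "0 \<le> t" "t \<le> 1"
    let ?D = "gradf (y + t *\<^sub>R h) \<bullet> h - gradf y \<bullet> h - L * t * norm h ^ 2"
    have deriv: "(\<phi> has_real_derivative ?D) (at t)"
      unfolding \<phi>_def
      by (rule has_real_derivative_along_line[OF grad] derivative_eq_intros refl | simp)+
    have "(gradf (y + t *\<^sub>R h) - gradf y) \<bullet> h \<le> norm (gradf (y + t *\<^sub>R h) - gradf y) * norm h"
      by (rule norm_cauchy_schwarz)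
    also have "\<dots> \<le> L * norm (t *\<^sub>R h) * norm h"
      using smooth[of "y + t *\<^sub>R h" y] by (simp add: mult_right_mono)
    also have "\<dots> = L * t * norm h ^ 2"
      using t by (simp add: power2_eq_square)
    finally have "?D \<le> 0"
      by (simp add: inner_diff_left)
    with deriv show "\<exists>D. (\<phi> has_real_derivative D) (at t) \<and> D \<le> 0"
      by blast
  qed simp
  then show ?thesis by (simp add: \<phi>_def)
qed

lemma gradient_step_sufficient_decrease:
  fixes f :: "'a::real_inner \<Rightarrow> real"
  assumes grad: "\<And>z. (f has_derivative (\<lambda>h. gradf z \<bullet> h)) (at z)"
    and smooth: "\<And>u v. norm (gradf u - gradf v) \<le> L * norm (u - v)"
    and s: "0 \<le> s" "L * s \<le> 1"
  shows "f (y - s *\<^sub>R gradf y) \<le> f y - s / 2 * norm (gradf y) ^ 2"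
proof -
  let ?g = "gradf y"
  have "f (y - s *\<^sub>R ?g) \<le> f y + ?g \<bullet> (- s *\<^sub>R ?g) + L / 2 * norm (- s *\<^sub>R ?g) ^ 2"
    using lipschitz_gradient_quadratic_upper_bound[OF grad smooth, of y "- s *\<^sub>R ?g"] by simp
  also have "\<dots> = f y - s * norm ?g ^ 2 + (L * s) * s / 2 * norm ?g ^ 2"
    by (simp add: power2_eq_square algebra_simps flip: power2_norm_eq_inner)
  also have "\<dots> \<le> f y - s * norm ?g ^ 2 + 1 * s / 2 * norm ?g ^ 2"
    using s by (intro add_left_mono mult_right_mono divide_right_mono) auto
  finally show ?thesis by simp
qed

lemma momentum_inner_gradient_nonpos:
  fixes g d d' :: "'a::real_inner"
  assumes s: "0 < s" and b: "b \<le> 1"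
    and step: "s *\<^sub>R g = b *\<^sub>R d - d'"
    and accel: "0 \<le> (d' - d) \<bullet> d"
  shows "g \<bullet> d \<le> 0"
proof -
  have "s * (g \<bullet> d) = b * (d \<bullet> d) - d' \<bullet> d"
    using arg_cong[OF step, of "\<lambda>v. v \<bullet> d"] by (simp add: inner_diff_left)
  also have "\<dots> \<le> (b - 1) * (d \<bullet> d)"
    using accel by (simp add: inner_diff_left algebra_simps)
  also have "\<dots> \<le> 0"
    using b by (simp add: mult_nonpos_nonneg)
  finally show ?thesis
    using s by (simp add: mult_le_0_iff)
qed

lemma momentum_step_sufficient_decrease:
  fixes f :: "'a::real_inner \<Rightarrow> real"
  assumes grad: "\<And>z. (f has_derivative (\<lambda>h. gradf z \<bullet> h)) (at z)"
    and cvx: "convex_on UNIV f"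
    and smooth: "\<And>u v. norm (gradf u - gradf v) \<le> L * norm (u - v)"
    and y: "y = x + b *\<^sub>R (x - x')"
    and x'': "x'' = y - s *\<^sub>R gradf y"
    and s: "0 < s" "L * s \<le> 1"
    and b: "0 \<le> b" "b \<le> 1"
    and accel: "0 \<le> (x'' - 2 *\<^sub>R x + x') \<bullet> (x - x')"
  shows "f x'' \<le> f x - s / 2 * norm (gradf y) ^ 2"
proof -
  let ?g = "gradf y" and ?d = "x - x'"
  have "?g \<bullet> ?d \<le> 0"
  proof (rule momentum_inner_gradient_nonpos[OF s(1) b(2)])
    show "s *\<^sub>R ?g = b *\<^sub>R ?d - (x'' - x)"
      using x'' y by simp
    show "0 \<le> ((x'' - x) - ?d) \<bullet> ?d"
      using accel by (simp add: scaleR_2 algebra_simps)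
  qed
  with b(1) have "0 \<le> ?g \<bullet> (x - y)"
    using y by (simp add: mult_nonneg_nonpos)
  then have "f y \<le> f x"
    using convex_on_gradient_inequality[OF grad cvx, of y x] by linarith
  then show ?thesis
    using gradient_step_sufficient_decrease[OF grad smooth, of s y] s x'' by simp
qed

lemma momentum_step_strict_decrease:
  fixes f :: "'a::real_inner \<Rightarrow> real"
  assumes grad: "\<And>z. (f has_derivative (\<lambda>h. gradf z \<bullet> h)) (at z)"
    and cvx: "convex_on UNIV f"
    and smooth: "\<And>u v. norm (gradf u - gradf v) \<le> L * norm (u - v)"
    and min0: "\<And>z. z \<noteq> 0 \<Longrightarrow> f 0 < f z"
    and y: "y = x + b *\<^sub>R (x - x')"
    and x'': "x'' = y - s *\<^sub>R gradf y"
    and s: "0 < s" "L * s \<le> 1"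
    and b: "0 \<le> b" "b \<le> 1"
    and accel: "0 \<le> (x'' - 2 *\<^sub>R x + x') \<bullet> (x - x')"
    and x: "x \<noteq> 0"
  shows "f x'' < f x"
proof (cases "gradf y = 0")
  case False
  with s(1) have "0 < s / 2 * norm (gradf y) ^ 2"
    by simp
  then show ?thesis
    using momentum_step_sufficient_decrease[OF grad cvx smooth y x'' s b accel] by linarith
next
  case True
  then have "f y \<le> f 0"
    using convex_on_gradient_inequality[OF grad cvx, of y 0] by simp
  then have "y = 0"
    using min0[of y] by fastforce
  with True x'' have "x'' = 0"
    by simp
  then show ?thesis
    using min0[OF x] by simp
qed

theorem theorem3:
  fixes f :: "real ^ 'n \<Rightarrow> real"
    and gradf :: "real ^ 'n \<Rightarrow> real ^ 'n"
    and L :: real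
    and x y :: "int \<Rightarrow> real ^ 'n"
    and s b :: "int \<Rightarrow> real"
  assumes grad: "\<And>z. (f has_derivative (\<lambda>h. gradf z \<bullet> h)) (at z)"
    and C1: "continuous_on UNIV gradf"
    and cvx: "convex_on UNIV f"
    and L_pos: "L > 0"
    and smooth: "\<And>u v. norm (gradf u - gradf v) \<le> L * norm (u - v)"
    and min0: "\<And>z. z \<noteq> 0 \<Longrightarrow> f 0 < f z"
    and f0: "f 0 = 0"
    and y_def: "\<And>k. k \<ge> 0 \<Longrightarrow> y k = x k + b k *\<^sub>R (x k - x (k - 1))"
    and x_step: "\<And>k. k \<ge> 0 \<Longrightarrow> x (k + 1) = y k - s k *\<^sub>R gradf (y k)"
    and s_bnd: "\<And>k. k \<ge> 0 \<Longrightarrow> 0 < s k \<and> s k \<le> 1 / L"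
    and b_bnd: "\<And>k. k \<ge> 0 \<Longrightarrow> 0 < b k \<and> b k \<le> 1"
    and cond: "\<And>k. k \<ge> 0 \<Longrightarrow>
                 (x (k + 1) - 2 *\<^sub>R x k + x (k - 1)) \<bullet> (x k - x (k - 1)) \<ge> 0"
  shows "\<forall>k\<ge>0. x k \<noteq> 0 \<longrightarrow> f (x (k + 1)) < f (x k)"
proof (intro allI impI)
  fix k :: int assume k: "k \<ge> 0" and xk: "x k \<noteq> 0"
  have "L * s k \<le> 1"
    using s_bnd[OF k] L_pos by (simp add: field_simps)
  with s_bnd[OF k] b_bnd[OF k] show "f (x (k + 1)) < f (x k)"
    by (intro momentum_step_strict_decrease[OF grad cvx smooth min0 y_def[OF k] x_step[OF k]
          _ _ _ _ cond[OF k] xk]) auto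
qed

end
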